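(* Let $k$ be a field, $V$ a $k$-vector space and $\varphi,\psi\in\mathrm{End}_k(V)$ finite potent endomorphisms such that the commutator $\varphi\psi-\psi\varphi$ has finite rank. Then $\varphi+\psi$ is finite potent.
   Context: An endomorphism $\varphi$ of $V$ is finite potent if $\varphi^nV$ is finite dimensional for some $n$. *)

theory Defs
  imports Complex_Main
begin

definition fin_dim :: "('k::field \<Rightarrow> 'v::ab_group_add \<Rightarrow> 'v) \<Rightarrow> 'v set \<Rightarrow> bool" where
  "fin_dim scale W \<longleftrightarrow> (\<exists>B. finite B \<and> B \<subseteq> W \<and> Modules.module.span scale B = W)"

definition finite_potent :: "('k::field \<Rightarrow> 'v::ab_group_add \<Rightarrow> 'v) \<Rightarrow> ('v \<Rightarrow> 'v) \<Rightarrow> bool" where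
  "finite_potent scale f \<longleftrightarrow> (\<exists>n. fin_dim scale (range (f ^^ n)))"

definition finite_rank :: "('k::field \<Rightarrow> 'v::ab_group_add \<Rightarrow> 'v) \<Rightarrow> ('v \<Rightarrow> 'v) \<Rightarrow> bool" where
  "finite_rank scale f \<longleftrightarrow> fin_dim scale (range f)"

end

theory Submission
  imports Defs "HOL-Library.Function_Algebras"
begin

text \<open>Write \<open>f \<approx> g\<close> when \<open>f - g\<close> has range in a finite-dimensional subspace. From
  \<open>\<phi>\<psi> \<approx> \<psi>\<phi>\<close> one gets \<open>\<phi>\<psi>^k \<approx> \<psi>^k\<phi>\<close>, and then, with \<open>T = \<phi> + \<psi>\<close>, maps \<open>A\<close>, \<open>B\<close> with
  \<open>T^(p+q) \<approx> \<phi>^p A + \<psi>^q B\<close> by induction on \<open>p + q\<close>: expand \<open>T^(p+q) = \<phi> T^(p+q-1) + \<psi> T^(p+q-1)\<close>,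
  use the hypothesis for \<open>(p - 1, q)\<close> in the first summand and for \<open>(p, q - 1)\<close> in the second,
  and commute \<open>\<phi>\<close> past \<open>\<psi>^q\<close> and \<open>\<psi>\<close> past \<open>\<phi>^p\<close>. Choosing \<open>p\<close>, \<open>q\<close> with \<open>\<phi>^p\<close>, \<open>\<psi>^q\<close> of
  finite rank makes the right-hand side, hence \<open>T^(p+q)\<close>, of finite rank.\<close>

text \<open>The maps \<open>A\<close>, \<open>B\<close> above need not be linear, so instead of finite rank we use containment
  of the range in a finite span.\<close>

definition finite_span_range ::
    "('k::field \<Rightarrow> 'v::ab_group_add \<Rightarrow> 'v) \<Rightarrow> ('a \<Rightarrow> 'v) \<Rightarrow> bool" where
  "finite_span_range scale f \<longleftrightarrow> (\<exists>B. finite B \<and> range f \<subseteq> module.span scale B)"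

definition eq_mod_finite_span ::
    "('k::field \<Rightarrow> 'v::ab_group_add \<Rightarrow> 'v) \<Rightarrow> ('a \<Rightarrow> 'v) \<Rightarrow> ('a \<Rightarrow> 'v) \<Rightarrow> bool" where
  "eq_mod_finite_span scale f g \<longleftrightarrow> finite_span_range scale (f - g)"

context vector_space
begin

abbreviation eq_mod_fs (infix "\<approx>" 50) where
  "f \<approx> g \<equiv> eq_mod_finite_span scale f g"

lemma linear_funpow: "Vector_Spaces.linear scale scale f \<Longrightarrow> Vector_Spaces.linear scale scale (f ^^ n)"
  by (induction n) (simp_all add: linear_id Vector_Spaces.linear_compose)

lemma linear_comp_add:
  "Vector_Spaces.linear scale scale h \<Longrightarrow> h \<circ> (f + g) = (h \<circ> f) + (h \<circ> g)"
  by (simp add: fun_eq_iff Vector_Spaces.linear_iff)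

lemma linear_plus:
  "Vector_Spaces.linear scale scale f \<Longrightarrow> Vector_Spaces.linear scale scale g
    \<Longrightarrow> Vector_Spaces.linear scale scale (f + g)"
  unfolding Vector_Spaces.linear_iff by (simp add: algebra_simps scale_right_distrib)

lemma linear_comp_zero:
  assumes "Vector_Spaces.linear scale scale h"
  shows "h \<circ> 0 = 0"
proof -
  interpret h: Vector_Spaces.linear scale scale h by fact
  show ?thesis by (simp add: fun_eq_iff)
qed

lemma finite_span_range_if_fin_dim: "fin_dim scale (range f) \<Longrightarrow> finite_span_range scale f"
  unfolding fin_dim_def finite_span_range_def by blast

lemma fin_dim_range_if_finite_span_range:
  assumes "Vector_Spaces.linear scale scale f" and "finite_span_range scale f"
  shows "fin_dim scale (range f)"
proof -
  obtain B where "finite B" and range_sub: "range f \<subseteq> span B"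
    using assms(2) unfolding finite_span_range_def by blast
  interpret f: Vector_Spaces.linear scale scale f by fact
  obtain C where C: "C \<subseteq> range f" "independent C" "range f \<subseteq> span C"
    by (rule basis_exists)
  have "finite C"
    using independent_span_bound[OF \<open>finite B\<close> C(2)] C(1) range_sub by auto
  moreover have "span C = range f"
    using span_subspace[OF C(1,3) f.subspace_image[OF subspace_UNIV]] .
  ultimately show ?thesis
    unfolding fin_dim_def using C(1) by blast
qed

lemma finite_span_range_zero: "finite_span_range scale 0"
  unfolding finite_span_range_def using span_zero by auto

lemma finite_span_range_add:
  assumes "finite_span_range scale f" and "finite_span_range scale g"
  shows "finite_span_range scale (f + g)"
proof -
  obtain B C where "finite B" "range f \<subseteq> span B" "finite C" "range g \<subseteq> span C"
    using assms unfolding finite_span_range_def by blast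
  then have "range (f + g) \<subseteq> span (B \<union> C)"
    by (auto intro!: span_add intro: span_mono[THEN subsetD])
  then show ?thesis
    using \<open>finite B\<close> \<open>finite C\<close> unfolding finite_span_range_def by blast
qed

lemma finite_span_range_uminus:
  assumes "finite_span_range scale f"
  shows "finite_span_range scale (- f)"
proof -
  obtain B where "finite B" "range f \<subseteq> span B"
    using assms unfolding finite_span_range_def by blast
  then have "range (- f) \<subseteq> span B"
    using span_neg by auto
  then show ?thesis
    using \<open>finite B\<close> unfolding finite_span_range_def by blast
qed

lemma finite_span_range_comp_right:
  "finite_span_range scale f \<Longrightarrow> finite_span_range scale (f \<circ> h)"
  unfolding finite_span_range_def by (auto simp: image_subset_iff)

lemma finite_span_range_comp_left:
  assumes "Vector_Spaces.linear scale scale h" and "finite_span_range scale f"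
  shows "finite_span_range scale (h \<circ> f)"
proof -
  interpret h: Vector_Spaces.linear scale scale h by fact
  obtain B where "finite B" "range f \<subseteq> span B"
    using assms(2) unfolding finite_span_range_def by blast
  then have "range (h \<circ> f) \<subseteq> span (h ` B)"
    using h.span_image by (auto simp flip: image_comp)
  then show ?thesis
    using \<open>finite B\<close> unfolding finite_span_range_def by blast
qed

lemma eq_mod_fs_refl: "f \<approx> f"
  by (simp add: eq_mod_finite_span_def finite_span_range_zero)

lemma eq_mod_fs_sym:
  assumes "f \<approx> g"
  shows "g \<approx> f"
proof -
  have "g - f = - (f - g)" by simp
  then show ?thesis
    using assms finite_span_range_uminus unfolding eq_mod_finite_span_def by metis
qed

lemma eq_mod_fs_trans [trans]:
  assumes "f \<approx> g" and "g \<approx> h"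
  shows "f \<approx> h"
proof -
  have "f - h = (f - g) + (g - h)" by simp
  then show ?thesis
    using assms finite_span_range_add unfolding eq_mod_finite_span_def by metis
qed

lemma eq_eq_mod_fs_trans [trans]: "f = g \<Longrightarrow> g \<approx> h \<Longrightarrow> f \<approx> h"
  and eq_mod_fs_eq_trans [trans]: "f \<approx> g \<Longrightarrow> g = h \<Longrightarrow> f \<approx> h"
  by simp_all

lemma eq_mod_fs_add:
  assumes "f \<approx> f'" and "g \<approx> g'"
  shows "f + g \<approx> f' + g'"
proof -
  have "(f + g) - (f' + g') = (f - f') + (g - g')" by simp
  then show ?thesis
    using assms finite_span_range_add unfolding eq_mod_finite_span_def by metis
qed

lemma eq_mod_fs_comp_right: "f \<approx> g \<Longrightarrow> f \<circ> h \<approx> g \<circ> h"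
  unfolding eq_mod_finite_span_def
  using finite_span_range_comp_right by (fastforce simp: fun_diff_def comp_def)

lemma eq_mod_fs_comp_left:
  assumes "Vector_Spaces.linear scale scale h" and "f \<approx> g"
  shows "h \<circ> f \<approx> h \<circ> g"
proof -
  interpret h: Vector_Spaces.linear scale scale h by fact
  have "(h \<circ> f) - (h \<circ> g) = h \<circ> (f - g)"
    by (simp add: fun_eq_iff h.diff)
  then show ?thesis
    using assms finite_span_range_comp_left unfolding eq_mod_finite_span_def by metis
qed

lemma finite_span_range_eq_mod_fs:
  assumes "f \<approx> g" and "finite_span_range scale g"
  shows "finite_span_range scale f"
  using finite_span_range_add[OF assms[unfolded eq_mod_finite_span_def]] by simp

lemma comp_funpow_eq_mod_fs:
  assumes "Vector_Spaces.linear scale scale g" and "f \<circ> g \<approx> g \<circ> f"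
  shows "f \<circ> g ^^ n \<approx> g ^^ n \<circ> f"
proof (induction n)
  case 0
  show ?case by (simp add: eq_mod_fs_refl)
next
  case (Suc n)
  have "f \<circ> g ^^ Suc n = (f \<circ> g) \<circ> g ^^ n" by (simp add: o_assoc)
  also have "\<dots> \<approx> (g \<circ> f) \<circ> g ^^ n" using assms(2) by (rule eq_mod_fs_comp_right)
  also have "\<dots> = g \<circ> (f \<circ> g ^^ n)" by (simp add: o_assoc)
  also have "\<dots> \<approx> g \<circ> (g ^^ n \<circ> f)" using assms(1) Suc.IH by (rule eq_mod_fs_comp_left)
  also have "\<dots> = g ^^ Suc n \<circ> f" by (simp add: o_assoc)
  finally show ?case .
qed

lemma funpow_add_eq_mod_fs:
  assumes lin_f: "Vector_Spaces.linear scale scale f" and lin_g: "Vector_Spaces.linear scale scale g"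
    and comm: "f \<circ> g \<approx> g \<circ> f"
  shows "\<exists>A B. (f + g) ^^ (p + q) \<approx> (f ^^ p \<circ> A) + (g ^^ q \<circ> B)"
proof (induction "p + q" arbitrary: p q rule: less_induct)
  case less
  consider "p = 0" | "q = 0" | p' q' where "p = Suc p'" "q = Suc q'"
    by (meson not0_implies_Suc)
  then show ?case
  proof cases
    case 1
    then have "(f + g) ^^ (p + q) = (f ^^ p \<circ> (f + g) ^^ q) + (g ^^ q \<circ> 0)"
      using linear_comp_zero[OF linear_funpow[OF lin_g]] by simp
    then show ?thesis using eq_mod_fs_refl by metis
  next
    case 2
    then have "(f + g) ^^ (p + q) = (f ^^ p \<circ> 0) + (g ^^ q \<circ> (f + g) ^^ p)"
      using linear_comp_zero[OF linear_funpow[OF lin_f]] by simp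
    then show ?thesis using eq_mod_fs_refl by metis
  next
    case 3
    obtain A1 B1 where IH1: "(f + g) ^^ (p' + q) \<approx> (f ^^ p' \<circ> A1) + (g ^^ q \<circ> B1)"
      using less[of p' q] 3 by auto
    obtain A2 B2 where IH2: "(f + g) ^^ (p' + q) \<approx> (f ^^ p \<circ> A2) + (g ^^ q' \<circ> B2)"
      using less[of p q'] 3 by auto
    have "(f + g) ^^ (p + q) = (f \<circ> (f + g) ^^ (p' + q)) + (g \<circ> (f + g) ^^ (p' + q))"
      using 3 by (simp add: fun_eq_iff)
    also have "\<dots> \<approx> (f \<circ> ((f ^^ p' \<circ> A1) + (g ^^ q \<circ> B1)))
        + (g \<circ> ((f ^^ p \<circ> A2) + (g ^^ q' \<circ> B2)))"
      using lin_f lin_g IH1 IH2 by (intro eq_mod_fs_add eq_mod_fs_comp_left)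
    also have "\<dots> = (f ^^ p \<circ> A1) + ((f \<circ> g ^^ q) \<circ> B1)
        + ((g \<circ> f ^^ p) \<circ> A2) + (g ^^ q \<circ> B2)"
      using 3 lin_f lin_g by (simp add: linear_comp_add o_assoc add_ac)
    also have "\<dots> \<approx> (f ^^ p \<circ> A1) + ((g ^^ q \<circ> f) \<circ> B1)
        + ((f ^^ p \<circ> g) \<circ> A2) + (g ^^ q \<circ> B2)"
      using comp_funpow_eq_mod_fs[OF lin_g comm]
        comp_funpow_eq_mod_fs[OF lin_f eq_mod_fs_sym[OF comm]]
      by (intro eq_mod_fs_add eq_mod_fs_refl eq_mod_fs_comp_right)
    also have "\<dots> = (f ^^ p \<circ> (A1 + (g \<circ> A2))) + (g ^^ q \<circ> ((f \<circ> B1) + B2))"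
      using linear_funpow[OF lin_f] linear_funpow[OF lin_g]
      by (simp add: linear_comp_add o_assoc add_ac)
    finally show ?thesis by blast
  qed
qed

end

theorem lemma3p3:
  fixes scale :: "'k::field \<Rightarrow> 'v::ab_group_add \<Rightarrow> 'v"
    and \<phi> \<psi> :: "'v \<Rightarrow> 'v"
  assumes "vector_space scale"
    and "Vector_Spaces.linear scale scale \<phi>"
    and "Vector_Spaces.linear scale scale \<psi>"
    and "finite_potent scale \<phi>"
    and "finite_potent scale \<psi>"
    and "finite_rank scale (\<lambda>x. \<phi> (\<psi> x) - \<psi> (\<phi> x))"
  shows "finite_potent scale (\<lambda>x. \<phi> x + \<psi> x)"
proof -
  interpret vector_space scale by fact
  obtain n m where n: "fin_dim scale (range (\<phi> ^^ n))" and m: "fin_dim scale (range (\<psi> ^^ m))"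
    using assms(4,5) unfolding finite_potent_def by blast
  have "\<phi> \<circ> \<psi> \<approx> \<psi> \<circ> \<phi>"
    using finite_span_range_if_fin_dim assms(6)
    unfolding finite_rank_def eq_mod_finite_span_def by (simp add: fun_diff_def)
  then obtain A B where "(\<phi> + \<psi>) ^^ (n + m) \<approx> (\<phi> ^^ n \<circ> A) + (\<psi> ^^ m \<circ> B)"
    using funpow_add_eq_mod_fs assms(2,3) by blast
  moreover have "finite_span_range scale ((\<phi> ^^ n \<circ> A) + (\<psi> ^^ m \<circ> B))"
    using n m by (intro finite_span_range_add finite_span_range_comp_right finite_span_range_if_fin_dim)
  ultimately have "fin_dim scale (range ((\<phi> + \<psi>) ^^ (n + m)))"
    using assms(2,3) finite_span_range_eq_mod_fs
    by (intro fin_dim_range_if_finite_span_range linear_funpow linear_plus)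
  then show ?thesis
    unfolding finite_potent_def plus_fun_def by blast
qed

end
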